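(* Let $m\equiv3\pmod8$ and $\mathfrak n_m^{(p_+,p_-)}=(\mathfrak v_m^+)^{p_+}\oplus(\mathfrak v_m^-)^{p_-}\oplus\mathbb R^m$. If ${\rm Lag}(\mathfrak n_m^{(p_+,p_-)})\neq\emptyset$, then $p_+=p_-$.
   Context: $C(m)$ is the real Clifford algebra of $\mathbb R^m$ (relations $z^2=-\langle z,z\rangle1$). For $m\equiv3\pmod4$, with $z_1,\dots,z_m$ a fixed orthonormal basis and $K_m=J_{z_1}\cdots J_{z_m}$, there are two irreducible $C(m)$-modules up to isomorphism, $\mathfrak v_m^\pm$, on which $K_m$ acts as $\pm\mathrm{Id}$. Modules carry inner products making each $J_z$ skew-symmetric, and $\mathfrak n_m^{(p_+,p_-)}$ is the Lie algebra of Heisenberg type with $\mathbb R^m$ central and $\langle z,[u,v]\rangle=(J_zu,v)$ on $\mathfrak v=(\mathfrak v_m^+)^{p_+}\oplus(\mathfrak v_m^-)^{p_-}$. ${\rm Lag}(\mathfrak n)$ is the set of subspaces $\mathcal L\subset\mathfrak v$ with $[\mathcal L,\mathcal L]=0$ and $\dim\mathcal L=\frac12\dim\mathfrak v$. *)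

theory Defs
  imports "HOL-Analysis.Analysis"
begin

text \<open>A (real) C(m)-module with admissible inner product: J i is the action of the
  i-th vector z_(i+1) of the fixed orthonormal basis of R^m (i < m).  The relations
  z^2 = -<z,z> 1 are equivalent to J_i^2 = -Id and J_i J_j = - J_j J_i (i ~= j);
  J_z = sum_i z_i J_i.\<close>
definition clifford_module :: "nat \<Rightarrow> (nat \<Rightarrow> 'v::euclidean_space \<Rightarrow> 'v) \<Rightarrow> bool" where
  "clifford_module m J \<longleftrightarrow>
     (\<forall>i<m. linear (J i)) \<and>
     (\<forall>i<m. \<forall>u. J i (J i u) = - u) \<and>
     (\<forall>i<m. \<forall>j<m. i \<noteq> j \<longrightarrow> (\<forall>u. J i (J j u) = - J j (J i u))) \<and>
     (\<forall>i<m. \<forall>u w. inner (J i u) w = - inner u (J i w))"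

definition K_op :: "nat \<Rightarrow> (nat \<Rightarrow> 'v \<Rightarrow> 'v) \<Rightarrow> 'v \<Rightarrow> 'v" where
  "K_op m J = foldr (\<circ>) (map J [0..<m]) id"

definition invariant_subspace :: "nat \<Rightarrow> (nat \<Rightarrow> 'v::euclidean_space \<Rightarrow> 'v) \<Rightarrow> 'v set \<Rightarrow> bool" where
  "invariant_subspace m J W \<longleftrightarrow> subspace W \<and> (\<forall>i<m. J i ` W \<subseteq> W)"

definition irreducible_submodule :: "nat \<Rightarrow> (nat \<Rightarrow> 'v::euclidean_space \<Rightarrow> 'v) \<Rightarrow> 'v set \<Rightarrow> bool" where
  "irreducible_submodule m J W \<longleftrightarrow> invariant_subspace m J W \<and> W \<noteq> {0} \<and>
     (\<forall>U. invariant_subspace m J U \<and> U \<subseteq> W \<longrightarrow> U = {0} \<or> U = W)"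

text \<open>The module 'v is (v_m^+)^p_plus + (v_m^-)^p_minus: an orthogonal direct sum of
  p_plus irreducible submodules on which K_m = Id and p_minus on which K_m = -Id.\<close>
definition module_type :: "nat \<Rightarrow> (nat \<Rightarrow> 'v::euclidean_space \<Rightarrow> 'v) \<Rightarrow> nat \<Rightarrow> nat \<Rightarrow> bool" where
  "module_type m J p_plus p_minus \<longleftrightarrow>
     (\<exists>W :: nat \<Rightarrow> 'v set.
        (\<forall>k < p_plus + p_minus. irreducible_submodule m J (W k)) \<and>
        (\<forall>k < p_plus. \<forall>u \<in> W k. K_op m J u = u) \<and>
        (\<forall>k. p_plus \<le> k \<and> k < p_plus + p_minus \<longrightarrow> (\<forall>u \<in> W k. K_op m J u = - u)) \<and>
        (\<forall>k < p_plus + p_minus. \<forall>l < p_plus + p_minus. k \<noteq> l \<longrightarrow>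
            (\<forall>u \<in> W k. \<forall>w \<in> W l. inner u w = 0)) \<and>
        span (\<Union>k < p_plus + p_minus. W k) = UNIV)"

text \<open>Lie bracket of the H-type algebra on v: [u,w] in R^m (coordinates w.r.t. z_1..z_m,
  represented as nat => real supported on {0..<m}), with <z,[u,w]> = (J_z u, w).\<close>
definition heis_bracket :: "nat \<Rightarrow> (nat \<Rightarrow> 'v::euclidean_space \<Rightarrow> 'v) \<Rightarrow> 'v \<Rightarrow> 'v \<Rightarrow> nat \<Rightarrow> real" where
  "heis_bracket m J u w = (\<lambda>i. if i < m then inner (J i u) w else 0)"

definition Lag :: "nat \<Rightarrow> (nat \<Rightarrow> 'v::euclidean_space \<Rightarrow> 'v) \<Rightarrow> 'v set set" where
  "Lag m J = {L. subspace L \<and> (\<forall>u\<in>L. \<forall>w\<in>L. heis_bracket m J u w = (\<lambda>_. 0)) \<and>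
                 2 * dim L = DIM('v)}"

end

theory Submission
  imports Defs
begin

text \<open>
  Since (J_z u, w) = 0 for u, w in L and dim L = dim L^perp,
  each J_z maps L onto L^perp and L^perp into L. Hence the orthogonal reflection R in L
  anticommutes with every J_z and, m being odd, with K_m = J_z1 ... J_zm. So R is a linear
  isomorphism exchanging the +1- and -1-eigenspaces (v_m^+)^p_+ and (v_m^-)^p_- of K_m, and it
  intertwines the Clifford action up to the sign -1. A Jordan-Hoelder type count of irreducible
  summands, valid for such twisted intertwiners, gives p_+ \<le> p_- and p_- \<le> p_+.
\<close>

definition orthogonal_projection :: "'v::euclidean_space set \<Rightarrow> 'v \<Rightarrow> 'v" where
  "orthogonal_projection S x = (SOME y. y \<in> S \<and> x - y \<in> S\<^sup>\<bottom>)"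

lemma orthogonal_projection:
  fixes S :: "'v::euclidean_space set"
  assumes "subspace S"
  shows "orthogonal_projection S x \<in> S" and "x - orthogonal_projection S x \<in> S\<^sup>\<bottom>"
proof -
  obtain a b where "x = a + b" "a \<in> S" "b \<in> S\<^sup>\<bottom>"
    using subspace_sum_orthogonal_comp[OF assms] set_plus_elim by (metis UNIV_I)
  then have "\<exists>y. y \<in> S \<and> x - y \<in> S\<^sup>\<bottom>"
    by (metis add_diff_cancel_left')
  from someI_ex[OF this] show "orthogonal_projection S x \<in> S" "x - orthogonal_projection S x \<in> S\<^sup>\<bottom>"
    unfolding orthogonal_projection_def by auto
qed

lemma orthogonal_projection_unique:
  assumes "subspace S" "y \<in> S" "x - y \<in> S\<^sup>\<bottom>"
  shows "orthogonal_projection S x = y"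
proof -
  have "orthogonal_projection S x - y \<in> S"
    using subspace_diff[OF assms(1) orthogonal_projection(1)[OF assms(1)] assms(2)] .
  moreover have "(x - y) - (x - orthogonal_projection S x) \<in> S\<^sup>\<bottom>"
    using subspace_diff[OF subspace_orthogonal_comp assms(3) orthogonal_projection(2)[OF assms(1)]] .
  moreover have "(x - y) - (x - orthogonal_projection S x) = orthogonal_projection S x - y"
    by simp
  ultimately have "orthogonal_projection S x - y \<in> S \<inter> S\<^sup>\<bottom>"
    by simp
  then show ?thesis
    using orthogonal_Int_0[OF assms(1)] by simp
qed

lemma linear_orthogonal_projection:
  assumes "subspace S"
  shows "linear (orthogonal_projection S)"
proof (rule linearI)
  fix x y
  have "(x - orthogonal_projection S x) + (y - orthogonal_projection S y) \<in> S\<^sup>\<bottom>"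
    using orthogonal_projection(2)[OF assms] by (simp add: subspace_add subspace_orthogonal_comp)
  then show "orthogonal_projection S (x + y) = orthogonal_projection S x + orthogonal_projection S y"
    using orthogonal_projection(1)[OF assms] assms
    by (intro orthogonal_projection_unique) (simp_all add: subspace_add algebra_simps)
next
  fix c :: real and x
  have "c *\<^sub>R (x - orthogonal_projection S x) \<in> S\<^sup>\<bottom>"
    using orthogonal_projection(2)[OF assms] by (simp add: subspace_scale subspace_orthogonal_comp)
  then show "orthogonal_projection S (c *\<^sub>R x) = c *\<^sub>R orthogonal_projection S x"
    using orthogonal_projection(1)[OF assms] assms
    by (intro orthogonal_projection_unique) (simp_all add: subspace_scale scaleR_diff_right)
qed

lemma orthogonal_projection_commute:
  assumes "subspace S" "linear f" "f ` S \<subseteq> S" "\<And>u w. inner (f u) w = - inner u (f w)"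
  shows "orthogonal_projection S (f x) = f (orthogonal_projection S x)"
proof (rule orthogonal_projection_unique[OF assms(1)])
  show "f (orthogonal_projection S x) \<in> S"
    using orthogonal_projection(1)[OF assms(1)] assms(3) by blast
  have "inner w (f (x - orthogonal_projection S x)) = 0" if "w \<in> S" for w
  proof -
    have "f w \<in> S" using assms(3) that by blast
    then have "inner (f w) (x - orthogonal_projection S x) = 0"
      using orthogonal_projection(2)[OF assms(1)] by (auto simp: orthogonal_comp_def orthogonal_def)
    then show ?thesis
      using assms(4) by (simp add: inner_commute)
  qed
  then show "f x - f (orthogonal_projection S x) \<in> S\<^sup>\<bottom>"
    by (simp add: orthogonal_comp_def orthogonal_def linear_diff[OF assms(2)])
qed

definition orthogonal_reflection :: "'v::euclidean_space set \<Rightarrow> 'v \<Rightarrow> 'v" where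
  "orthogonal_reflection S x = 2 *\<^sub>R orthogonal_projection S x - x"

lemma orthogonal_reflection_add:
  assumes "subspace S" "a \<in> S" "b \<in> S\<^sup>\<bottom>"
  shows "orthogonal_reflection S (a + b) = a - b"
  using orthogonal_projection_unique[OF assms(1,2), of "a + b"] assms(3)
  by (simp add: orthogonal_reflection_def scaleR_2)

lemma orthogonal_reflection_eq:
  "orthogonal_reflection S x = orthogonal_projection S x - (x - orthogonal_projection S x)"
  by (simp add: orthogonal_reflection_def scaleR_2)

lemma linear_orthogonal_reflection:
  assumes "subspace S"
  shows "linear (orthogonal_reflection S)"
  using linear_orthogonal_projection[OF assms]
  by (intro linearI) (simp_all add: orthogonal_reflection_def linear_add linear_scale algebra_simps)

lemma orthogonal_reflection_involution:
  assumes "subspace S"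
  shows "orthogonal_reflection S (orthogonal_reflection S x) = x"
proof -
  let ?a = "orthogonal_projection S x" and ?b = "x - orthogonal_projection S x"
  have "orthogonal_reflection S x = ?a + - ?b"
    by (simp add: orthogonal_reflection_eq)
  moreover have "- ?b \<in> S\<^sup>\<bottom>"
    using subspace_neg[OF subspace_orthogonal_comp orthogonal_projection(2)[OF assms]] .
  ultimately show ?thesis
    using orthogonal_reflection_add[OF assms orthogonal_projection(1)[OF assms], of "- ?b" x]
    by simp
qed

lemma inj_orthogonal_reflection:
  assumes "subspace S"
  shows "inj (orthogonal_reflection S)"
  by (rule inj_on_inverseI[of _ "orthogonal_reflection S"])
    (rule orthogonal_reflection_involution[OF assms])

lemma orthogonal_reflection_anticommute:
  assumes "subspace S" "linear f" "f ` S \<subseteq> S\<^sup>\<bottom>" "f ` (S\<^sup>\<bottom>) \<subseteq> S"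
  shows "orthogonal_reflection S (f x) = - f (orthogonal_reflection S x)"
proof -
  let ?a = "orthogonal_projection S x" and ?b = "x - orthogonal_projection S x"
  have "f ?b \<in> S"
    using subsetD[OF assms(4) imageI[OF orthogonal_projection(2)[OF assms(1)]]] .
  have "f ?a \<in> S\<^sup>\<bottom>"
    using subsetD[OF assms(3) imageI[OF orthogonal_projection(1)[OF assms(1)]]] .
  have "orthogonal_reflection S (f x) = orthogonal_reflection S (f ?b + f ?a)"
    by (simp add: linear_diff[OF assms(2)])
  also have "\<dots> = f ?b - f ?a"
    by (rule orthogonal_reflection_add) fact+
  also have "\<dots> = - f (orthogonal_reflection S x)"
    by (simp add: orthogonal_reflection_eq linear_diff[OF assms(2)])
  finally show ?thesis .
qed

definition orthogonal_family :: "'i set \<Rightarrow> ('i \<Rightarrow> 'v::real_inner set) \<Rightarrow> bool" where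
  "orthogonal_family I U \<longleftrightarrow> (\<forall>k\<in>I. \<forall>l\<in>I. k \<noteq> l \<longrightarrow> (\<forall>u\<in>U k. \<forall>w\<in>U l. orthogonal u w))"

lemma orthogonal_familyD:
  "orthogonal_family I U \<Longrightarrow> k \<in> I \<Longrightarrow> l \<in> I \<Longrightarrow> k \<noteq> l \<Longrightarrow> u \<in> U k \<Longrightarrow> w \<in> U l
    \<Longrightarrow> orthogonal u w"
  unfolding orthogonal_family_def by blast

lemma orthogonal_family_subset:
  "orthogonal_family I U \<Longrightarrow> I' \<subseteq> I \<Longrightarrow> orthogonal_family I' U"
  unfolding orthogonal_family_def by blast

lemma span_insert_minus_orthogonal_projection:
  fixes W :: "'i \<Rightarrow> 'v::euclidean_space set"
  assumes "orthogonal_family (insert k I) W" "k \<notin> I" "subspace (W k)"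
    and "x \<in> span (\<Union>j\<in>insert k I. W j)"
  shows "x - orthogonal_projection (span (\<Union>j\<in>I. W j)) x \<in> W k"
proof -
  let ?X = "span (\<Union>j\<in>I. W j)"
  have "x \<in> span ((\<Union>j\<in>I. W j) \<union> W k)"
    using assms(4) by (simp add: Un_commute)
  then obtain a b where ab: "x = a + b" "a \<in> ?X" "b \<in> span (W k)"
    unfolding span_Un by blast
  have b: "b \<in> W k"
    using ab(3) assms(3) by (metis span_eq_iff)
  have "b \<in> ?X\<^sup>\<bottom>"
    unfolding orthogonal_comp_def
  proof (intro CollectI ballI)
    fix y assume "y \<in> ?X"
    then have "orthogonal b y"
      by (rule orthogonal_to_span)
        (use assms(1,2) b in \<open>auto simp: orthogonal_family_def\<close>)
    then show "orthogonal y b"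
      by (simp add: orthogonal_commute)
  qed
  then have "orthogonal_projection ?X x = a"
    using ab by (intro orthogonal_projection_unique) auto
  then show ?thesis
    using ab(1) b by simp
qed

lemma inj_on_orthogonal_projection_comp:
  fixes W :: "'i \<Rightarrow> 'v::euclidean_space set"
  assumes "orthogonal_family (insert k I) W" "k \<notin> I" "subspace (W k)"
    and "linear \<phi>" "subspace Y" "\<phi> ` Y \<subseteq> span (\<Union>j\<in>insert k I. W j)"
    and "\<forall>y\<in>Y. \<phi> y \<in> W k \<longrightarrow> y = 0"
  shows "inj_on (orthogonal_projection (span (\<Union>j\<in>I. W j)) \<circ> \<phi>) Y"
proof -
  let ?P = "orthogonal_projection (span (\<Union>j\<in>I. W j))"
  have "y = 0" if y: "y \<in> Y" "?P (\<phi> y) = 0" for y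
  proof -
    have "\<phi> y - ?P (\<phi> y) \<in> W k"
      using assms(1-3,6) y(1) by (intro span_insert_minus_orthogonal_projection) auto
    then show ?thesis
      using assms(7) y by simp
  qed
  moreover have "linear (?P \<circ> \<phi>)"
    using linear_orthogonal_projection[OF subspace_span] assms(4) by (rule linear_compose[rotated])
  ultimately show ?thesis
    using assms(5) by (simp add: linear_inj_on_iff_eq_0)
qed

lemma invariant_subspace_Int:
  "invariant_subspace m J U \<Longrightarrow> invariant_subspace m J V \<Longrightarrow> invariant_subspace m J (U \<inter> V)"
  unfolding invariant_subspace_def image_subset_iff by (auto intro: subspace_inter)

definition twisted_intertwiner :: "nat \<Rightarrow> (nat \<Rightarrow> 'v::real_vector \<Rightarrow> 'v) \<Rightarrow> real \<Rightarrow> ('v \<Rightarrow> 'v) \<Rightarrow> bool" where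
  "twisted_intertwiner m J \<sigma> \<phi> \<longleftrightarrow> linear \<phi> \<and> (\<forall>i<m. \<forall>y. \<phi> (J i y) = \<sigma> *\<^sub>R J i (\<phi> y))"

lemma invariant_subspace_twisted_vimage:
  assumes "invariant_subspace m J W" "twisted_intertwiner m J \<sigma> \<phi>"
  shows "invariant_subspace m J (\<phi> -` W)"
  using assms
  by (auto simp: invariant_subspace_def twisted_intertwiner_def image_subset_iff
      intro: subspace_scale linear_subspace_vimage)

lemma invariant_subspace_twisted_image:
  assumes "invariant_subspace m J Z" "twisted_intertwiner m J \<sigma> \<phi>" "\<sigma> \<noteq> 0"
  shows "invariant_subspace m J (\<phi> ` Z)"
  unfolding invariant_subspace_def
proof (intro conjI allI impI)
  show "subspace (\<phi> ` Z)"
    using assms(1,2) by (simp add: invariant_subspace_def twisted_intertwiner_def linear_subspace_image)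
  fix i assume i: "i < m"
  show "J i ` \<phi> ` Z \<subseteq> \<phi> ` Z"
  proof
    fix x assume "x \<in> J i ` \<phi> ` Z"
    then obtain z where z: "z \<in> Z" "x = J i (\<phi> z)"
      by blast
    have "J i z \<in> Z"
      using assms(1) i z(1) by (auto simp: invariant_subspace_def)
    then have "(1 / \<sigma>) *\<^sub>R J i z \<in> Z"
      using assms(1) by (simp add: invariant_subspace_def subspace_scale)
    moreover have "\<phi> ((1 / \<sigma>) *\<^sub>R J i z) = x"
      using assms(2,3) i z(2) by (simp add: twisted_intertwiner_def linear_scale)
    ultimately show "x \<in> \<phi> ` Z"
      by blast
  qed
qed

locale skew_adjoint_family =
  fixes m :: nat and J :: "nat \<Rightarrow> 'v::euclidean_space \<Rightarrow> 'v"
  assumes linear_J: "i < m \<Longrightarrow> linear (J i)"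
    and skew_J: "i < m \<Longrightarrow> inner (J i u) w = - inner u (J i w)"

lemma clifford_module_skew_adjoint_family:
  "clifford_module m J \<Longrightarrow> skew_adjoint_family m J"
  unfolding clifford_module_def skew_adjoint_family_def by blast

context skew_adjoint_family
begin

lemma invariant_subspace_span_UN:
  assumes "\<forall>k\<in>I. invariant_subspace m J (W k)"
  shows "invariant_subspace m J (span (\<Union>k\<in>I. W k))"
  unfolding invariant_subspace_def
proof (intro conjI allI impI)
  show "subspace (span (\<Union>k\<in>I. W k))"
    by simp
  fix i assume i: "i < m"
  have "J i ` span (\<Union>k\<in>I. W k) = span (J i ` (\<Union>k\<in>I. W k))"
    using linear_J[OF i] by (simp add: span_linear_image)
  also have "\<dots> \<subseteq> span (\<Union>k\<in>I. W k)"
    using assms i unfolding invariant_subspace_def by (intro span_mono) blast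
  finally show "J i ` span (\<Union>k\<in>I. W k) \<subseteq> span (\<Union>k\<in>I. W k)" .
qed

lemma invariant_subspace_orthogonal_comp:
  assumes "invariant_subspace m J U"
  shows "invariant_subspace m J (U\<^sup>\<bottom>)"
  unfolding invariant_subspace_def
proof (intro conjI allI impI subsetI)
  show "subspace (U\<^sup>\<bottom>)"
    by (rule subspace_orthogonal_comp)
  fix i x assume i: "i < m" and "x \<in> J i ` (U\<^sup>\<bottom>)"
  then obtain v where v: "v \<in> U\<^sup>\<bottom>" "x = J i v"
    by blast
  have "orthogonal u (J i v)" if "u \<in> U" for u
  proof -
    have "J i u \<in> U"
      using assms i that unfolding invariant_subspace_def by blast
    then have "inner (J i u) v = 0"
      using v(1) by (simp add: orthogonal_comp_def orthogonal_def)
    then show ?thesis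
      using skew_J[OF i] by (simp add: orthogonal_def)
  qed
  then show "x \<in> U\<^sup>\<bottom>"
    using v(2) by (simp add: orthogonal_comp_def)
qed

lemma twisted_intertwiner_orthogonal_projection:
  assumes "invariant_subspace m J X" "twisted_intertwiner m J \<sigma> \<phi>"
  shows "twisted_intertwiner m J \<sigma> (orthogonal_projection X \<circ> \<phi>)"
proof -
  have X: "subspace X"
    using assms(1) by (simp add: invariant_subspace_def)
  have "orthogonal_projection X (J i x) = J i (orthogonal_projection X x)" if "i < m" for i x
    using assms(1) that linear_J skew_J
    by (intro orthogonal_projection_commute) (auto simp: invariant_subspace_def)
  then show ?thesis
    using assms(2) linear_orthogonal_projection[OF X]
    by (auto simp: twisted_intertwiner_def linear_compose linear_scale)
qed

lemma twisted_vimage_irreducible_Int_orthogonal_comp: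
  assumes "irreducible_submodule m J W" "invariant_subspace m J Y" "invariant_subspace m J U"
    and "twisted_intertwiner m J \<sigma> \<phi>" "\<sigma> \<noteq> 0" "inj_on \<phi> Y"
    and "y0 \<in> Y" "\<phi> y0 \<in> W" "y0 \<notin> U\<^sup>\<bottom>"
  shows "Y \<inter> \<phi> -` W \<inter> U\<^sup>\<bottom> = {0}"
proof -
  let ?Z = "Y \<inter> \<phi> -` W \<inter> U\<^sup>\<bottom>"
  have W: "invariant_subspace m J W"
    using assms(1) by (simp add: irreducible_submodule_def)
  have Z: "invariant_subspace m J ?Z"
    using invariant_subspace_Int[OF invariant_subspace_Int[OF assms(2)
        invariant_subspace_twisted_vimage[OF W assms(4)]]
        invariant_subspace_orthogonal_comp[OF assms(3)]] .
  have "\<phi> ` ?Z \<noteq> W"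
  proof
    assume "\<phi> ` ?Z = W"
    then obtain z where z: "z \<in> ?Z" "\<phi> z = \<phi> y0"
      using assms(8) by (metis imageE)
    moreover have "z \<in> Y"
      using z(1) by simp
    ultimately have "z = y0"
      using inj_onD[OF assms(6)] assms(7) by simp
    then show False
      using z(1) assms(9) by blast
  qed
  then have "\<phi> ` ?Z = {0}"
    using assms(1) invariant_subspace_twisted_image[OF Z assms(4,5)]
    unfolding irreducible_submodule_def by blast
  moreover have "\<forall>y\<in>Y. \<phi> y = 0 \<longrightarrow> y = 0"
    using assms(2,4,6)
    by (simp add: twisted_intertwiner_def invariant_subspace_def linear_inj_on_iff_eq_0)
  moreover have "0 \<in> ?Z"
    using Z subspace_0 unfolding invariant_subspace_def by blast
  ultimately show ?thesis
    by auto
qed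

lemma exists_subfamily_twisted_vimage_trivial:
  assumes "finite I" "\<forall>l\<in>I. invariant_subspace m J (U l)" "orthogonal_family I U"
    and "irreducible_submodule m J W" "twisted_intertwiner m J \<sigma> \<phi>" "\<sigma> \<noteq> 0"
    and "inj_on \<phi> (span (\<Union>l\<in>I. U l))"
  obtains I' where "I' \<subseteq> I" "card I \<le> Suc (card I')"
    "\<forall>y\<in>span (\<Union>l\<in>I'. U l). \<phi> y \<in> W \<longrightarrow> y = 0"
proof (cases "\<forall>y\<in>span (\<Union>l\<in>I. U l). \<phi> y \<in> W \<longrightarrow> y = 0")
  case True
  then show ?thesis
    using that[of I] by simp
next
  case False
  let ?Y = "span (\<Union>l\<in>I. U l)"
  from False obtain y0 where y0: "y0 \<in> ?Y" "\<phi> y0 \<in> W" "y0 \<noteq> 0"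
    by blast
  have "\<exists>l\<in>I. y0 \<notin> (U l)\<^sup>\<bottom>"
  proof (rule ccontr)
    assume "\<not> (\<exists>l\<in>I. y0 \<notin> (U l)\<^sup>\<bottom>)"
    then have "orthogonal u y0" if "u \<in> (\<Union>l\<in>I. U l)" for u
      using that by (auto simp: orthogonal_comp_def)
    then have "orthogonal y0 y0"
      by (intro orthogonal_to_span[OF y0(1)]) (simp add: orthogonal_commute)
    with y0(3) show False
      by (simp add: orthogonal_self)
  qed
  then obtain l where l: "l \<in> I" "y0 \<notin> (U l)\<^sup>\<bottom>"
    by blast
  have Y: "invariant_subspace m J ?Y"
    using assms(2) by (rule invariant_subspace_span_UN)
  have "invariant_subspace m J (U l)"
    using assms(2) l(1) by blast
  then have trivial: "?Y \<inter> \<phi> -` W \<inter> (U l)\<^sup>\<bottom> = {0}"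
    by (rule twisted_vimage_irreducible_Int_orthogonal_comp[OF assms(4) Y _ assms(5,6,7) y0(1,2) l(2)])
  have "span (\<Union>j\<in>I - {l}. U j) \<subseteq> ?Y"
    by (intro span_mono) blast
  have "y = 0" if y: "y \<in> span (\<Union>j\<in>I - {l}. U j)" "\<phi> y \<in> W" for y
  proof -
    have "orthogonal u y" if u: "u \<in> U l" for u
    proof (rule orthogonal_to_span[OF y(1)])
      fix w assume "w \<in> (\<Union>j\<in>I - {l}. U j)"
      then obtain j where "j \<in> I" "l \<noteq> j" "w \<in> U j"
        by blast
      then show "orthogonal u w"
        using orthogonal_familyD[OF assms(3) l(1)] u by blast
    qed
    then have "y \<in> ?Y \<inter> \<phi> -` W \<inter> (U l)\<^sup>\<bottom>"
      using y \<open>span (\<Union>j\<in>I - {l}. U j) \<subseteq> ?Y\<close> by (auto simp: orthogonal_comp_def)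
    then show ?thesis
      unfolding trivial by simp
  qed
  moreover have "card I = Suc (card (I - {l}))"
    using assms(1) l(1) by (rule card_Suc_Diff1[symmetric])
  ultimately show ?thesis
    by (intro that[of "I - {l}"]) auto
qed

text \<open>Induction on \<open>I\<close>: composing with the orthogonal projection that discards the summand
  \<open>W k\<close> keeps the map injective after dropping at most one of the \<open>U l\<close>.\<close>

lemma card_le_by_twisted_intertwiner:
  assumes "finite I" "\<forall>k\<in>I. irreducible_submodule m J (W k)" "orthogonal_family I W"
    and "finite I'" "\<forall>l\<in>I'. invariant_subspace m J (U l) \<and> U l \<noteq> {0}" "orthogonal_family I' U"
    and "twisted_intertwiner m J \<sigma> \<phi>" "\<sigma> \<noteq> 0"
    and "inj_on \<phi> (span (\<Union>l\<in>I'. U l))" "\<phi> ` span (\<Union>l\<in>I'. U l) \<subseteq> span (\<Union>k\<in>I. W k)"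
  shows "card I' \<le> card I"
  using assms
proof (induction I arbitrary: I' \<phi> rule: finite_induct)
  case empty
  let ?Y = "span (\<Union>l\<in>I'. U l)"
  have "linear \<phi>"
    using empty.prems(6) by (simp add: twisted_intertwiner_def)
  then have "?Y \<subseteq> {0}"
    using empty.prems(8,9) linear_inj_on_iff_eq_0[OF _ subspace_span] by auto
  then have "U l \<subseteq> {0}" if "l \<in> I'" for l
    using that span_superset by blast
  then have "I' = {}"
    using empty.prems(4) subspace_0 by (fastforce simp: invariant_subspace_def)
  then show ?case
    by simp
next
  case (insert k I)
  let ?X = "span (\<Union>j\<in>I. W j)"
  define \<psi> where "\<psi> = orthogonal_projection ?X \<circ> \<phi>"
  have Wk: "irreducible_submodule m J (W k)"
    using insert.prems(1) by simp
  have X: "invariant_subspace m J ?X"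
    using insert.prems(1) by (intro invariant_subspace_span_UN) (simp add: irreducible_submodule_def)
  obtain I'' where I'': "I'' \<subseteq> I'" "card I' \<le> Suc (card I'')"
    "\<forall>y\<in>span (\<Union>l\<in>I''. U l). \<phi> y \<in> W k \<longrightarrow> y = 0"
  proof (rule exists_subfamily_twisted_vimage_trivial[OF insert.prems(3) _ insert.prems(5) Wk
        insert.prems(6,7,8)])
    show "\<forall>l\<in>I'. invariant_subspace m J (U l)"
      using insert.prems(4) by blast
  qed
  have "span (\<Union>l\<in>I''. U l) \<subseteq> span (\<Union>l\<in>I'. U l)"
    using I''(1) by (intro span_mono) blast
  then have "inj_on \<psi> (span (\<Union>l\<in>I''. U l))"
    using insert.prems(2,6,9) insert.hyps(2) Wk I''(3) unfolding \<psi>_def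
    by (intro inj_on_orthogonal_projection_comp)
      (auto simp: twisted_intertwiner_def irreducible_submodule_def invariant_subspace_def)
  moreover have "twisted_intertwiner m J \<sigma> \<psi>"
    unfolding \<psi>_def using X insert.prems(6) by (rule twisted_intertwiner_orthogonal_projection)
  moreover have "\<psi> ` span (\<Union>l\<in>I''. U l) \<subseteq> ?X"
    using orthogonal_projection(1)[of ?X] by (auto simp: \<psi>_def)
  ultimately have "card I'' \<le> card I"
    using insert.prems I''(1) finite_subset[OF I''(1)]
    by (intro insert.IH[of I'' \<psi>]) (auto intro: orthogonal_family_subset)
  then show ?case
    using I''(2) insert.hyps by simp
qed

lemma card_subfamily_le_by_twisted_intertwiner:
  assumes "finite N" "\<forall>k\<in>N. irreducible_submodule m J (W k)" "orthogonal_family N W"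
    and "I \<subseteq> N" "I' \<subseteq> N" "twisted_intertwiner m J \<sigma> \<phi>" "\<sigma> \<noteq> 0" "inj \<phi>"
    and "\<phi> ` span (\<Union>l\<in>I'. W l) \<subseteq> span (\<Union>k\<in>I. W k)"
  shows "card I' \<le> card I"
proof (rule card_le_by_twisted_intertwiner[OF _ _ _ _ _ _ assms(6,7) _ assms(9)])
  show "finite I" "finite I'"
    using assms(1,4,5) finite_subset by blast+
  show "\<forall>k\<in>I. irreducible_submodule m J (W k)"
    "\<forall>l\<in>I'. invariant_subspace m J (W l) \<and> W l \<noteq> {0}"
    using assms(2,4,5) by (auto simp: irreducible_submodule_def)
  show "orthogonal_family I W" "orthogonal_family I' W"
    using assms(3,4,5) by (auto intro: orthogonal_family_subset)
  show "inj_on \<phi> (span (\<Union>l\<in>I'. W l))"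
    using assms(8) by (rule inj_on_subset) simp
qed

end

lemma anticommuting_swaps_eigenspaces:
  fixes K R :: "'v::real_vector \<Rightarrow> 'v"
  assumes "linear R" "\<And>x. K (R x) = - R (K x)"
  shows "R ` {v. K v = v} \<subseteq> {v. K v = - v}" and "R ` {v. K v = - v} \<subseteq> {v. K v = v}"
  using assms by (auto simp: linear_neg)

lemma foldr_comp_eq_comp: "foldr (\<circ>) fs g = foldr (\<circ>) fs id \<circ> g"
  by (induction fs) (simp_all add: comp_assoc)

lemma K_op_Suc: "K_op (Suc n) J = K_op n J \<circ> J n"
  unfolding K_op_def by (simp add: foldr_comp_eq_comp[of _ "J n"])

lemma linear_K_op:
  fixes J :: "nat \<Rightarrow> 'v::real_vector \<Rightarrow> 'v"
  assumes "\<And>i. i < n \<Longrightarrow> linear (J i)"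
  shows "linear (K_op n J)"
  using assms
proof (induction n)
  case 0
  then show ?case
    using linear_id by (simp add: K_op_def id_def)
next
  case (Suc n)
  then show ?case
    unfolding K_op_Suc by (intro linear_compose) simp_all
qed

lemma K_op_anticommute:
  fixes J :: "nat \<Rightarrow> 'v::real_vector \<Rightarrow> 'v"
  assumes "\<And>i. i < n \<Longrightarrow> linear (J i)" "\<And>i x. i < n \<Longrightarrow> R (J i x) = - J i (R x)"
    and "linear R"
  shows "R (K_op n J x) = (-1) ^ n *\<^sub>R K_op n J (R x)"
  using assms(1,2)
proof (induction n arbitrary: x)
  case 0
  then show ?case
    by (simp add: K_op_def)
next
  case (Suc n)
  have "R (K_op (Suc n) J x) = (-1) ^ n *\<^sub>R K_op n J (R (J n x))"
    using Suc by (simp add: K_op_Suc)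
  also have "\<dots> = (-1) ^ Suc n *\<^sub>R K_op n J (J n (R x))"
    using Suc.prems linear_K_op[of n J] by (simp add: linear_neg)
  finally show ?case
    by (simp add: K_op_Suc)
qed

lemma eigenspaces_eq_span:
  fixes K :: "'v::real_vector \<Rightarrow> 'v"
  assumes "linear K" "span (A \<union> B) = UNIV"
    and "\<And>a. a \<in> A \<Longrightarrow> K a = a" "\<And>b. b \<in> B \<Longrightarrow> K b = - b"
  shows "{v. K v = v} = span A" and "{v. K v = - v} = span B"
proof -
  have KA: "K a = id a" if "a \<in> span A" for a
    by (rule linear_eq_on_span[OF assms(1) linear_id _ that]) (simp add: assms(3))
  have KB: "K b = uminus b" if "b \<in> span B" for b
    by (rule linear_eq_on_span[OF assms(1) linear_uminus _ that]) (simp add: assms(4))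
  have decomp: "\<exists>a b. v = a + b \<and> a \<in> span A \<and> b \<in> span B \<and> K v = a - b" for v
  proof -
    obtain a b where "v = a + b" "a \<in> span A" "b \<in> span B"
      using assms(2) unfolding span_Un by blast
    then show ?thesis
      using KA KB linear_add[OF assms(1)] by fastforce
  qed
  show "{v. K v = v} = span A"
  proof (intro subset_antisym subsetI)
    fix v assume v: "v \<in> {v. K v = v}"
    obtain a b where ab: "v = a + b" "a \<in> span A" "b \<in> span B" "K v = a - b"
      using decomp by blast
    have "b + b = (a + b) - (a - b)"
      by (simp add: algebra_simps)
    also have "\<dots> = 0"
      using v ab by simp
    finally have "b = 0"
      by (simp flip: scaleR_2)
    then show "v \<in> span A"
      using ab by simp
  qed (use KA in simp)
  show "{v. K v = - v} = span B"
  proof (intro subset_antisym subsetI)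
    fix v assume v: "v \<in> {v. K v = - v}"
    obtain a b where ab: "v = a + b" "a \<in> span A" "b \<in> span B" "K v = a - b"
      using decomp by blast
    have "a + a = (a - b) - (- (a + b))"
      by (simp add: algebra_simps)
    also have "\<dots> = 0"
      using v ab by simp
    finally have "a = 0"
      by (simp flip: scaleR_2)
    then show "v \<in> span B"
      using ab by simp
  qed (use KB in simp)
qed

lemma module_type_eigenspaces:
  fixes J :: "nat \<Rightarrow> 'v::euclidean_space \<Rightarrow> 'v"
  assumes "\<And>i. i < m \<Longrightarrow> linear (J i)" "module_type m J p q"
  obtains W where "\<forall>k\<in>{..<p + q}. irreducible_submodule m J (W k)" "orthogonal_family {..<p + q} W"
    "{v. K_op m J v = v} = span (\<Union>k<p. W k)"
    "{v. K_op m J v = - v} = span (\<Union>k\<in>{p..<p + q}. W k)"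
proof -
  obtain W where W: "\<forall>k<p + q. irreducible_submodule m J (W k)"
    "\<forall>k<p. \<forall>u\<in>W k. K_op m J u = u"
    "\<forall>k. p \<le> k \<and> k < p + q \<longrightarrow> (\<forall>u\<in>W k. K_op m J u = - u)"
    "\<forall>k<p + q. \<forall>l<p + q. k \<noteq> l \<longrightarrow> (\<forall>u\<in>W k. \<forall>w\<in>W l. inner u w = 0)"
    "span (\<Union>k<p + q. W k) = UNIV"
    using assms(2) unfolding module_type_def by (elim exE conjE) blast
  have "{..<p + q} = {..<p} \<union> {p..<p + q}"
    by auto
  then have span_all: "span ((\<Union>k<p. W k) \<union> (\<Union>k\<in>{p..<p + q}. W k)) = UNIV"
    using W(5) by (simp only: UN_Un)
  have plus: "K_op m J u = u" if "u \<in> (\<Union>k<p. W k)" for u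
    using W(2) that by blast
  have minus: "K_op m J u = - u" if "u \<in> (\<Union>k\<in>{p..<p + q}. W k)" for u
    using W(3) that by auto
  have "\<forall>k\<in>{..<p + q}. irreducible_submodule m J (W k)"
    using W(1) by simp
  moreover have "orthogonal_family {..<p + q} W"
    using W(4) by (simp add: orthogonal_family_def orthogonal_def)
  ultimately show ?thesis
    using eigenspaces_eq_span[OF linear_K_op[OF assms(1)] span_all plus minus] by (rule that)
qed

lemma Lag_image_eq_orthogonal_comp:
  fixes J :: "nat \<Rightarrow> 'v::euclidean_space \<Rightarrow> 'v"
  assumes "clifford_module m J" "L \<in> Lag m J" "i < m"
  shows "J i ` L = L\<^sup>\<bottom>"
proof (rule subspace_dim_equal)
  have L: "subspace L" "2 * dim L = DIM('v)"
    using assms(2) by (simp_all add: Lag_def)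
  have isotropic: "inner (J i u) w = 0" if "u \<in> L" "w \<in> L" for u w
  proof -
    have "heis_bracket m J u w i = 0"
      using assms(2) that by (simp add: Lag_def)
    then show ?thesis
      using assms(3) by (simp add: heis_bracket_def)
  qed
  have lin: "linear (J i)" and JJ: "\<And>u. J i (J i u) = - u"
    using assms(1,3) by (auto simp: clifford_module_def)
  show "subspace (J i ` L)"
    using lin L(1) by (rule linear_subspace_image)
  show "subspace (L\<^sup>\<bottom>)"
    by (rule subspace_orthogonal_comp)
  show "J i ` L \<subseteq> L\<^sup>\<bottom>"
    using isotropic by (auto simp: orthogonal_comp_def orthogonal_def inner_commute)
  have "dim (L\<^sup>\<bottom>) + dim L = DIM('v)"
    using dim_subspace_orthogonal_to_vectors[OF L(1) subspace_UNIV]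
    by (simp add: orthogonal_comp_def dim_UNIV)
  moreover have "inj_on (J i) (span L)"
  proof (rule inj_onI)
    fix x y assume "J i x = J i y"
    then have "J i (J i x) = J i (J i y)"
      by simp
    then show "x = y"
      by (simp add: JJ)
  qed
  then have "dim (J i ` L) = dim L"
    using lin by (intro dim_image_eq)
  ultimately show "dim (L\<^sup>\<bottom>) \<le> dim (J i ` L)"
    using L(2) by simp
qed

lemma twisted_intertwiner_Lag_orthogonal_reflection:
  assumes "clifford_module m J" "L \<in> Lag m J"
  shows "twisted_intertwiner m J (-1) (orthogonal_reflection L)"
  unfolding twisted_intertwiner_def
proof (intro conjI allI impI)
  have L: "subspace L"
    using assms(2) by (simp add: Lag_def)
  then show "linear (orthogonal_reflection L)"
    by (rule linear_orthogonal_reflection)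
  fix i y assume i: "i < m"
  have lin: "linear (J i)"
    using assms(1) i by (simp add: clifford_module_def)
  have "J i ` L \<subseteq> L\<^sup>\<bottom>"
    using Lag_image_eq_orthogonal_comp[OF assms i] by simp
  moreover have "J i ` (L\<^sup>\<bottom>) \<subseteq> L"
  proof
    fix x assume "x \<in> J i ` (L\<^sup>\<bottom>)"
    then obtain u where "u \<in> L" "x = J i (J i u)"
      unfolding Lag_image_eq_orthogonal_comp[OF assms i, symmetric] by blast
    then show "x \<in> L"
      using assms(1) i L by (simp add: clifford_module_def subspace_neg)
  qed
  ultimately show "orthogonal_reflection L (J i y) = (-1) *\<^sub>R J i (orthogonal_reflection L y)"
    using orthogonal_reflection_anticommute[OF L lin] by simp
qed

theorem proposition5p7:
  fixes m p_plus p_minus :: nat and J :: "nat \<Rightarrow> 'v::euclidean_space \<Rightarrow> 'v"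
  assumes "m mod 8 = 3"
    and "clifford_module m J"
    and "module_type m J p_plus p_minus"
    and "Lag m J \<noteq> {}"
  shows "p_plus = p_minus"
proof -
  interpret skew_adjoint_family m J
    using assms(2) by (rule clifford_module_skew_adjoint_family)
  obtain L where L: "L \<in> Lag m J"
    using assms(4) by blast
  then have "subspace L"
    by (simp add: Lag_def)
  define R where "R = orthogonal_reflection L"
  have R: "twisted_intertwiner m J (-1) R" "inj R"
    unfolding R_def using twisted_intertwiner_Lag_orthogonal_reflection[OF assms(2) L]
      inj_orthogonal_reflection[OF \<open>subspace L\<close>] .
  have "odd m"
    using assms(1) by presburger
  then have "K_op m J (R x) = - R (K_op m J x)" for x
    using K_op_anticommute[of m J R x] linear_J R(1) by (simp add: twisted_intertwiner_def)
  with R(1) have swap: "R ` {v. K_op m J v = v} \<subseteq> {v. K_op m J v = - v}"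
    "R ` {v. K_op m J v = - v} \<subseteq> {v. K_op m J v = v}"
    by (simp_all add: twisted_intertwiner_def anticommuting_swaps_eigenspaces)
  obtain W where W: "\<forall>k\<in>{..<p_plus + p_minus}. irreducible_submodule m J (W k)"
    "orthogonal_family {..<p_plus + p_minus} W"
    "{v. K_op m J v = v} = span (\<Union>k<p_plus. W k)"
    "{v. K_op m J v = - v} = span (\<Union>k\<in>{p_plus..<p_plus + p_minus}. W k)"
    using module_type_eigenspaces[OF linear_J assms(3)] by blast
  have "{..<p_plus} \<subseteq> {..<p_plus + p_minus}" "{p_plus..<p_plus + p_minus} \<subseteq> {..<p_plus + p_minus}"
    by auto
  from card_subfamily_le_by_twisted_intertwiner[OF _ W(1,2) this(2,1) R(1) _ R(2) swap(1)[unfolded W(3,4)]]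
    card_subfamily_le_by_twisted_intertwiner[OF _ W(1,2) this R(1) _ R(2) swap(2)[unfolded W(3,4)]]
  show ?thesis
    by simp
qed

end
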